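(* Every sequence $a_1,a_2,\dotsc$ in a semigroup has a sumsequence $b_1,b_2,\dotsc$ of one of the following two types: (1) $b_n+b_m=b_n$ for all natural numbers $n<m$; or (2) for every natural number $n$, $\mathrm{FS}(b_1,\dotsc,b_n)\cap(\mathrm{FS}(b_1,\dotsc,b_n)+b_{n+1})=\emptyset$.
   Context: Semigroups are written additively and are not assumed commutative. For a sequence $a_1,a_2,\dotsc$ and a finite nonempty index set $F=\{i_1<\dotsb<i_m\}$, $a_F:=a_{i_1}+\dotsb+a_{i_m}$; $F_1<F_2$ means every element of $F_1$ is smaller than every element of $F_2$. A sumsequence of $a_1,a_2,\dotsc$ is a sequence $a_{F_1},a_{F_2},\dotsc$ for nonempty finite index sets $F_1<F_2<\dotsb$. $\mathrm{FS}(b_1,\dotsc,b_n):=\{b_{i_1}+\dotsb+b_{i_m}: m\ge1,\ i_1<\dotsb<i_m\le n\}$, and for a set $X$ and element $c$, $X+c:=\{x+c:x\in X\}$. *)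

theory Defs
  imports Main
begin

fun listsum1 :: "'a::semigroup_add list \<Rightarrow> 'a" where
  "listsum1 [x] = x"
| "listsum1 (x # y # ys) = x + listsum1 (y # ys)"
| "listsum1 [] = undefined"

definition idxsum :: "(nat \<Rightarrow> 'a::semigroup_add) \<Rightarrow> nat set \<Rightarrow> 'a" where
  "idxsum a F = listsum1 (map a (sorted_list_of_set F))"

definition sumsequence :: "(nat \<Rightarrow> 'a::semigroup_add) \<Rightarrow> (nat \<Rightarrow> 'a) \<Rightarrow> bool" where
  "sumsequence a b \<longleftrightarrow> (\<exists>F :: nat \<Rightarrow> nat set.
     (\<forall>n. finite (F n) \<and> F n \<noteq> {}) \<and>
     (\<forall>n m. n < m \<longrightarrow> (\<forall>x\<in>F n. \<forall>y\<in>F m. x < y)) \<and>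
     (\<forall>n. b n = idxsum a (F n)))"

text \<open>FS(b_0, ..., b_{n-1}) (0-based indexing).\<close>
definition FS :: "(nat \<Rightarrow> 'a::semigroup_add) \<Rightarrow> nat \<Rightarrow> 'a set" where
  "FS b n = {idxsum b G | G. G \<subseteq> {..<n} \<and> G \<noteq> {}}"

end

theory Submission
  imports Defs "HOL-Library.Infinite_Set"
begin

text \<open>
  Call a sequence head-absorbing if its first term absorbs every later term from the right.
  If some sequence c has no head-absorbing sumsequence, then for every m there is a finite block
  H beyond m with FS(c_0,...,c_{m-1}) disjoint from its translate by c_H: otherwise, by pigeonhole
  on the finitely many pairs (s, s + c_{[m,j)}), one and the same pair works for infinitely many
  j, and the resulting blocks form a head-absorbing sumsequence. Choosing such blocks greedily
  gives a sumsequence of type (2).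

  So if a has no sumsequence of type (2), every sumsequence of a has a head-absorbing
  sumsequence. Refining repeatedly, each time discarding the head and refining the tail, the
  successive heads form a sumsequence of type (1).
\<close>

lemma listsum1_append:
  "xs \<noteq> [] \<Longrightarrow> ys \<noteq> [] \<Longrightarrow> listsum1 (xs @ ys) = listsum1 xs + listsum1 ys"
proof (induction xs rule: listsum1.induct)
  case (1 x)
  then obtain z zs where "ys = z # zs" by (cases ys) auto
  then show ?case by simp
qed (simp_all add: add.assoc)

lemma sorted_list_of_set_Un_less:
  assumes "finite (A :: nat set)" "finite B" "\<forall>x\<in>A. \<forall>y\<in>B. x < y"
  shows "sorted_list_of_set (A \<union> B) = sorted_list_of_set A @ sorted_list_of_set B"
proof (rule strict_sorted_equal)
  show "sorted_wrt (<) (sorted_list_of_set A @ sorted_list_of_set B)"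
    using assms unfolding sorted_wrt_append by simp
qed (use assms in simp_all)

lemma idxsum_Un_less:
  assumes "finite A" "finite B" "A \<noteq> {}" "B \<noteq> {}" "\<forall>x\<in>A. \<forall>y\<in>B. x < y"
  shows "idxsum a (A \<union> B) = idxsum a A + idxsum a B"
  unfolding idxsum_def sorted_list_of_set_Un_less[OF assms(1,2,5)] map_append
  by (rule listsum1_append) (use assms in auto)

lemma idxsum_singleton [simp]: "idxsum a {i} = a i"
  by (simp add: idxsum_def)

lemma add_listsum1_absorb:
  "ys \<noteq> [] \<Longrightarrow> \<forall>y\<in>set ys. t + y = t \<Longrightarrow> t + listsum1 ys = (t :: 'a::semigroup_add)"
  by (induction ys rule: listsum1.induct) (auto simp: add.assoc[symmetric])

lemma add_idxsum_absorb:
  assumes "finite G" "G \<noteq> {}" "\<And>k. t + c k = t"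
  shows "t + idxsum c G = t"
  unfolding idxsum_def using assms by (intro add_listsum1_absorb) auto

definition blocks :: "(nat \<Rightarrow> nat set) \<Rightarrow> bool" where
  "blocks F \<longleftrightarrow> (\<forall>n. finite (F n) \<and> F n \<noteq> {}) \<and>
     (\<forall>n m. n < m \<longrightarrow> (\<forall>x\<in>F n. \<forall>y\<in>F m. x < y))"

lemma blocks_finite: "blocks F \<Longrightarrow> finite (F n)"
  and blocks_nonempty: "blocks F \<Longrightarrow> F n \<noteq> {}"
  and blocks_less: "blocks F \<Longrightarrow> n < m \<Longrightarrow> x \<in> F n \<Longrightarrow> y \<in> F m \<Longrightarrow> x < y"
  unfolding blocks_def by blast+

lemma blocks_singletons:
  assumes "strict_mono f"
  shows "blocks (\<lambda>n. {f n})"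
  using assms unfolding blocks_def strict_mono_def by simp

lemma blocks_image:
  assumes "strict_mono f" "blocks F"
  shows "blocks (\<lambda>n. f ` F n)"
  using assms unfolding blocks_def strict_mono_def by blast

lemma blocks_intervals:
  assumes "strict_mono e"
  shows "blocks (\<lambda>k. {e k..<e (Suc k)})"
  unfolding blocks_def
proof (intro conjI allI impI ballI)
  fix n m x y assume "n < m" "x \<in> {e n..<e (Suc n)}" "y \<in> {e m..<e (Suc m)}"
  moreover have "e (Suc n) \<le> e m" using \<open>n < m\<close> strict_mono_less_eq[OF assms] by simp
  ultimately show "x < y" by simp
qed (use strict_monoD[OF assms] in auto)

lemma blocks_cons:
  assumes "blocks F" "finite G" "G \<noteq> {}" "\<And>k x y. x \<in> G \<Longrightarrow> y \<in> F k \<Longrightarrow> x < y"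
  shows "blocks (\<lambda>n. case n of 0 \<Rightarrow> G | Suc k \<Rightarrow> F k)"
  unfolding blocks_def
proof (intro conjI allI impI ballI)
  fix n show "finite (case n of 0 \<Rightarrow> G | Suc k \<Rightarrow> F k)" "(case n of 0 \<Rightarrow> G | Suc k \<Rightarrow> F k) \<noteq> {}"
    using assms by (auto simp: blocks_def split: nat.split)
next
  fix n m x y assume "n < m" "x \<in> (case n of 0 \<Rightarrow> G | Suc k \<Rightarrow> F k)"
    "y \<in> (case m of 0 \<Rightarrow> G | Suc k \<Rightarrow> F k)"
  then show "x < y"
    using assms(4) blocks_less[OF assms(1)] by (cases n; cases m) auto
qed

lemma blocksI_Max:
  assumes ne: "\<And>n. finite (F n) \<and> F n \<noteq> {}" and gt: "\<And>n y. y \<in> F (Suc n) \<Longrightarrow> Max (F n) < y"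
  shows "blocks F"
proof -
  have mono: "strict_mono (\<lambda>n. Max (F n))"
    unfolding strict_mono_Suc_iff using gt ne Max_in by blast
  show ?thesis unfolding blocks_def
  proof (intro conjI allI impI ballI)
    fix n m x y assume "n < m" "x \<in> F n" "y \<in> F m"
    then obtain m' where m': "m = Suc m'" "n \<le> m'" by (cases m) auto
    have "x \<le> Max (F n)" using ne \<open>x \<in> F n\<close> by simp
    also have "\<dots> \<le> Max (F m')" using strict_mono_less_eq[OF mono] m'(2) by blast
    also have "\<dots> < y" using gt \<open>y \<in> F m\<close> m'(1) by blast
    finally show "x < y" .
  qed (use ne in blast)+
qed

lemma blocks_UN:
  assumes "blocks F" "blocks H"
  shows "blocks (\<lambda>k. \<Union>(F ` H k))"
  unfolding blocks_def
proof (intro conjI allI impI ballI)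
  fix n show "finite (\<Union>(F ` H n))" "\<Union>(F ` H n) \<noteq> {}"
    using assms unfolding blocks_def by auto
next
  fix n m x y assume "n < m" "x \<in> \<Union>(F ` H n)" "y \<in> \<Union>(F ` H m)"
  then obtain i j where "i \<in> H n" "x \<in> F i" "j \<in> H m" "y \<in> F j" by auto
  then show "x < y" using blocks_less[OF assms(1)] blocks_less[OF assms(2) \<open>n < m\<close>] by blast
qed

lemma listsum1_idxsum_blocks:
  assumes "blocks F" "sorted_wrt (<) xs" "xs \<noteq> []"
  shows "listsum1 (map (\<lambda>k. idxsum a (F k)) xs) = idxsum a (\<Union>(F ` set xs))"
  using assms(2,3)
proof (induction xs rule: listsum1.induct)
  case (2 x y zs)
  have "idxsum a (F x \<union> \<Union>(F ` set (y # zs))) = idxsum a (F x) + idxsum a (\<Union>(F ` set (y # zs)))"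
    using 2(2) blocks_finite[OF assms(1)] blocks_nonempty[OF assms(1)] blocks_less[OF assms(1)]
    by (intro idxsum_Un_less) auto
  then show ?case using 2 by simp
qed auto

lemma idxsum_idxsum_blocks:
  assumes "blocks F" "finite G" "G \<noteq> {}"
  shows "idxsum (\<lambda>k. idxsum a (F k)) G = idxsum a (\<Union>(F ` G))"
  using listsum1_idxsum_blocks[OF assms(1), of "sorted_list_of_set G" a] assms
  by (simp add: idxsum_def)

lemma idxsum_shift:
  assumes "finite G" "G \<noteq> {}"
  shows "idxsum (\<lambda>k. a (Suc k)) G = idxsum a (Suc ` G)"
proof -
  have "(\<Union>k\<in>G. {Suc k}) = Suc ` G" by blast
  then show ?thesis
    using idxsum_idxsum_blocks[OF blocks_singletons[of Suc] assms, of a]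
    by (simp add: strict_mono_Suc_iff)
qed

lemma sumsequence_iff_blocks:
  "sumsequence a b \<longleftrightarrow> (\<exists>F. blocks F \<and> b = (\<lambda>n. idxsum a (F n)))"
  unfolding sumsequence_def blocks_def fun_eq_iff by blast

lemma sumsequence_refl: "sumsequence a a"
  unfolding sumsequence_iff_blocks
  by (intro exI[of _ "\<lambda>n. {n}"]) (simp add: blocks_singletons strict_mono_def)

lemma sumsequence_shift: "sumsequence a (\<lambda>k. a (Suc k))"
  unfolding sumsequence_iff_blocks
  by (intro exI[of _ "\<lambda>n. {Suc n}"]) (simp add: blocks_singletons strict_mono_Suc_iff)

lemma sumsequence_trans:
  assumes "sumsequence a b" "sumsequence b c"
  shows "sumsequence a c"
proof -
  obtain F H where F: "blocks F" "b = (\<lambda>n. idxsum a (F n))" and H: "blocks H" "c = (\<lambda>n. idxsum b (H n))"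
    using assms unfolding sumsequence_iff_blocks by blast
  have "c = (\<lambda>n. idxsum a (\<Union>(F ` H n)))"
    using H(2) F idxsum_idxsum_blocks[OF F(1) blocks_finite[OF H(1)] blocks_nonempty[OF H(1)]] by auto
  then show ?thesis unfolding sumsequence_iff_blocks using blocks_UN[OF F(1) H(1)] by blast
qed

lemma sumsequence_imp_idxsum:
  assumes "sumsequence a b"
  obtains G where "finite G" "G \<noteq> {}" "b n = idxsum a G"
  using assms unfolding sumsequence_def by blast

definition fs_separated :: "(nat \<Rightarrow> 'a::semigroup_add) \<Rightarrow> bool" where
  "fs_separated b \<longleftrightarrow> (\<forall>n. FS b (Suc n) \<inter> ((\<lambda>x. x + b (Suc n)) ` FS b (Suc n)) = {})"

definition head_absorbing :: "(nat \<Rightarrow> 'a::semigroup_add) \<Rightarrow> bool" where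
  "head_absorbing b \<longleftrightarrow> (\<forall>k. b 0 + b (Suc k) = b 0)"

lemma finite_FS: "finite (FS c m)"
proof -
  have "FS c m = idxsum c ` {X. X \<subseteq> {..<m} \<and> X \<noteq> {}}" unfolding FS_def by blast
  then show ?thesis by simp
qed

lemma FS_blocks_subset:
  assumes "blocks F"
  shows "FS (\<lambda>k. idxsum c (F k)) (Suc n) \<subseteq> FS c (Suc (Max (F n)))"
proof
  fix v assume "v \<in> FS (\<lambda>k. idxsum c (F k)) (Suc n)"
  then obtain G where G: "G \<subseteq> {..n}" "G \<noteq> {}" "v = idxsum (\<lambda>k. idxsum c (F k)) G"
    unfolding FS_def lessThan_Suc_atMost by blast
  then have v: "v = idxsum c (\<Union>(F ` G))"
    using idxsum_idxsum_blocks[OF assms finite_subset[OF G(1)] G(2)] by simp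
  have "x \<le> Max (F n)" if "k \<le> n" "x \<in> F k" for k x
  proof (cases "k = n")
    case False
    then show ?thesis using that blocks_less[OF assms, of k n x "Max (F n)"]
        Max_in[OF blocks_finite[OF assms] blocks_nonempty[OF assms]] by simp
  qed (use that blocks_finite[OF assms] in simp)
  then have "\<Union>(F ` G) \<subseteq> {..<Suc (Max (F n))}" using G(1) by fastforce
  moreover have "\<Union>(F ` G) \<noteq> {}" using G(2) blocks_nonempty[OF assms] by blast
  ultimately show "v \<in> FS c (Suc (Max (F n)))" unfolding FS_def using v by blast
qed

lemma head_absorbing_sumsequence_if_constant:
  fixes c :: "nat \<Rightarrow> 'a::semigroup_add" and e :: "nat \<Rightarrow> nat"
  assumes e: "strict_mono e" "m < e 0" and X: "X \<subseteq> {..<m}" "X \<noteq> {}"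
    and t: "\<And>n. idxsum c X + idxsum c {m..<e n} = t"
  shows "\<exists>b. sumsequence c b \<and> head_absorbing b"
proof -
  have me: "m < e n" for n using e strict_mono_less_eq[OF e(1), of 0 n] by simp
  have finX: "finite X" using X(1) finite_subset by blast
  define B where "B n = (case n of 0 \<Rightarrow> X \<union> {m..<e 0} | Suc k \<Rightarrow> {e k..<e (Suc k)})" for n
  have "blocks B"
    unfolding B_def
  proof (rule blocks_cons[OF blocks_intervals[OF e(1)]])
    show "x < y" if "x \<in> X \<union> {m..<e 0}" "y \<in> {e k..<e (Suc k)}" for k x y
      using that X(1) me[of k] strict_mono_less_eq[OF e(1), of 0 k] by (auto simp: subset_eq)
  qed (use finX X(2) in auto)
  have "idxsum c (X \<union> {m..<e 0}) = idxsum c X + idxsum c {m..<e 0}"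
    by (rule idxsum_Un_less) (use finX X me[of 0] in auto)
  then have head: "idxsum c (B 0) = t" by (simp add: B_def t)
  have "t + idxsum c (B (Suc k)) = t" for k
  proof -
    have "e k < e (Suc k)" using strict_monoD[OF e(1)] by simp
    then have "idxsum c {m..<e (Suc k)} = idxsum c {m..<e k} + idxsum c (B (Suc k))"
      using idxsum_Un_less[of "{m..<e k}" "{e k..<e (Suc k)}" c] me[of k]
      by (simp add: B_def ivl_disj_un_two(3))
    then show ?thesis using t[of k] t[of "Suc k"] by (metis add.assoc)
  qed
  then have "head_absorbing (\<lambda>n. idxsum c (B n))" unfolding head_absorbing_def head by simp
  then show ?thesis using \<open>blocks B\<close> unfolding sumsequence_iff_blocks by blast
qed

lemma separating_block_if_no_head_absorbing:
  fixes c :: "nat \<Rightarrow> 'a::semigroup_add"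
  assumes "\<nexists>b. sumsequence c b \<and> head_absorbing b"
  shows "\<exists>H. finite H \<and> H \<noteq> {} \<and> (\<forall>x\<in>H. m \<le> x) \<and>
           FS c m \<inter> ((\<lambda>x. x + idxsum c H) ` FS c m) = {}"
proof (rule ccontr)
  assume no_separating: "\<not> ?thesis"
  have "\<exists>s. s \<in> FS c m \<and> s + idxsum c {m..<j} \<in> FS c m" if "m < j" for j
  proof -
    have "finite {m..<j} \<and> {m..<j} \<noteq> {} \<and> (\<forall>x\<in>{m..<j}. m \<le> x)"
      using that by simp
    then have "FS c m \<inter> ((\<lambda>x. x + idxsum c {m..<j}) ` FS c m) \<noteq> {}"
      using no_separating by blast
    then show ?thesis by blast
  qed
  then obtain s where s: "\<And>j. m < j \<Longrightarrow> s j \<in> FS c m \<and> s j + idxsum c {m..<j} \<in> FS c m"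
    by metis
  define p where "p j = (s j, s j + idxsum c {m..<j})" for j
  have "p ` {Suc m..} \<subseteq> FS c m \<times> FS c m" using s by (auto simp: p_def)
  then have "finite (p ` {Suc m..})" using finite_FS by (meson finite_SigmaI finite_subset)
  then obtain j0 where "j0 \<ge> Suc m" and "infinite {j \<in> {Suc m..}. p j = p j0}"
    using pigeonhole_infinite[OF infinite_Ici] by blast
  then obtain e :: "nat \<Rightarrow> nat" where e: "strict_mono e" "\<And>n. e n \<ge> Suc m \<and> p (e n) = p j0"
    using infinite_enumerate by blast
  obtain X where X: "X \<subseteq> {..<m}" "X \<noteq> {}" "s j0 = idxsum c X"
    using s[of j0] \<open>j0 \<ge> Suc m\<close> unfolding FS_def by auto
  have "idxsum c X + idxsum c {m..<e n} = s j0 + idxsum c {m..<j0}" for n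
  proof -
    have "p (e n) = p j0" using e(2) by blast
    then show ?thesis using X(3) unfolding p_def by (metis prod.inject)
  qed
  then show False
    using head_absorbing_sumsequence_if_constant[OF e(1) _ X(1,2)] e(2)[of 0] assms by auto
qed

lemma blocks_greedy:
  assumes "\<And>m. \<exists>H. finite H \<and> H \<noteq> {} \<and> (\<forall>x\<in>H. m \<le> x) \<and> P m H"
  shows "\<exists>F. blocks F \<and> (\<forall>n. P (Suc (Max (F n))) (F (Suc n)))"
proof -
  obtain nxt where nxt: "\<And>m. finite (nxt m) \<and> nxt m \<noteq> {} \<and> (\<forall>x\<in>nxt m. m \<le> x) \<and> P m (nxt m)"
    using assms by metis
  define F where "F = rec_nat {0} (\<lambda>_ h. nxt (Suc (Max h)))"
  have F0: "F 0 = {0}" and F_Suc: "F (Suc n) = nxt (Suc (Max (F n)))" for n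
    unfolding F_def by simp_all
  have "blocks F"
  proof (rule blocksI_Max)
    show "finite (F n) \<and> F n \<noteq> {}" for n by (cases n) (simp_all add: F0 F_Suc nxt)
    show "Max (F n) < y" if "y \<in> F (Suc n)" for n y
      using that nxt[of "Suc (Max (F n))"] by (auto simp: F_Suc Suc_le_eq)
  qed
  then show ?thesis using nxt F_Suc by auto
qed

lemma sumsequence_fs_separated_or_head_absorbing:
  "\<exists>b. sumsequence c b \<and> (fs_separated b \<or> head_absorbing b)"
proof (cases "\<exists>b. sumsequence c b \<and> head_absorbing b")
  case False
  obtain F where F: "blocks F"
    and sep: "\<And>n. FS c (Suc (Max (F n))) \<inter> ((\<lambda>x. x + idxsum c (F (Suc n))) ` FS c (Suc (Max (F n)))) = {}"
    using blocks_greedy[where P = "\<lambda>m H. FS c m \<inter> ((\<lambda>x. x + idxsum c H) ` FS c m) = {}"]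
      separating_block_if_no_head_absorbing[OF False] by blast
  have "fs_separated (\<lambda>n. idxsum c (F n))"
    unfolding fs_separated_def
  proof
    fix n show "FS (\<lambda>n. idxsum c (F n)) (Suc n) \<inter>
        ((\<lambda>x. x + idxsum c (F (Suc n))) ` FS (\<lambda>n. idxsum c (F n)) (Suc n)) = {}"
      using sep[of n] FS_blocks_subset[OF F, of c n] by blast
  qed
  then show ?thesis using F unfolding sumsequence_iff_blocks by blast
qed blast

lemma sumsequence_diagonal:
  assumes "\<And>j. sumsequence (\<lambda>k. d j (Suc k)) (d (Suc j))"
  shows "sumsequence (d 0) (\<lambda>j. d j 0)"
proof -
  obtain F where F: "\<And>j. blocks (F j)" "\<And>j. d (Suc j) = (\<lambda>n. idxsum (\<lambda>k. d j (Suc k)) (F j n))"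
    using assms unfolding sumsequence_iff_blocks by metis
  define E where "E = rec_nat (\<lambda>n. {n}) (\<lambda>j E n. \<Union>(E ` Suc ` F j n))"
  have E0: "E 0 = (\<lambda>n. {n})" and E_Suc: "E (Suc j) = (\<lambda>n. \<Union>(E j ` Suc ` F j n))" for j
    unfolding E_def by simp_all
  have blocks_E: "blocks (E j)" for j
  proof (induction j)
    case (Suc j)
    show ?case unfolding E_Suc
      by (rule blocks_UN[OF Suc blocks_image[OF _ F(1)]]) (simp add: strict_mono_Suc_iff)
  qed (simp add: E0 blocks_singletons strict_mono_def)
  have d_E: "d j = (\<lambda>n. idxsum (d 0) (E j n))" for j
  proof (induction j)
    case (Suc j)
    have "d (Suc j) n = idxsum (d j) (Suc ` F j n)" for n
      using F(2)[of j] idxsum_shift[OF blocks_finite[OF F(1)] blocks_nonempty[OF F(1)]] by simp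
    also have "\<dots> n = idxsum (d 0) (E (Suc j) n)" for n
      using Suc idxsum_idxsum_blocks[OF blocks_E[of j], of "Suc ` F j n" "d 0"]
        blocks_finite[OF F(1)] blocks_nonempty[OF F(1)] by (simp add: E_Suc)
    finally show ?case by blast
  qed (simp add: E0)
  have later: "E m k \<subseteq> \<Union>(E j ` {Suc 0..})" if "j < m" for j m k
    using that
  proof (induction m arbitrary: k rule: less_induct)
    case (less m)
    then obtain m' where m': "m = Suc m'" "j \<le> m'" by (cases m) auto
    show ?case
    proof (cases "j = m'")
      case False
      then show ?thesis using less(1)[of m'] m' by (auto simp: E_Suc)
    qed (use m' in \<open>auto simp: E_Suc\<close>)
  qed
  have "blocks (\<lambda>j. E j 0)"
    unfolding blocks_def
  proof (intro conjI allI impI ballI)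
    fix j m x y assume "j < m" "x \<in> E j 0" "y \<in> E m 0"
    then obtain i where "i \<ge> Suc 0" "y \<in> E j i" using later by blast
    then show "x < y" using blocks_less[OF blocks_E[of j], of 0 i] \<open>x \<in> E j 0\<close> by simp
  qed (use blocks_finite[OF blocks_E] blocks_nonempty[OF blocks_E] in auto)
  then show ?thesis unfolding sumsequence_iff_blocks using d_E by metis
qed

lemma left_absorbing_sumsequence:
  assumes "\<And>b. sumsequence a b \<Longrightarrow> \<exists>b'. sumsequence b b' \<and> head_absorbing b'"
  shows "\<exists>b. sumsequence a b \<and> (\<forall>n m. n < m \<longrightarrow> b n + b m = b n)"
proof -
  obtain g where g: "\<And>b. sumsequence a b \<Longrightarrow> sumsequence b (g b) \<and> head_absorbing (g b)"
    using assms by metis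
  define d where "d = rec_nat (g a) (\<lambda>_ b. g (\<lambda>k. b (Suc k)))"
  have d0: "d 0 = g a" and d_Suc: "d (Suc j) = g (\<lambda>k. d j (Suc k))" for j
    unfolding d_def by simp_all
  have tail: "sumsequence a (\<lambda>k. d j (Suc k)) \<and> head_absorbing (d j)" for j
  proof (induction j)
    case 0
    show ?case using g[OF sumsequence_refl] sumsequence_trans sumsequence_shift by (metis d0)
  next
    case (Suc j)
    then show ?case using g sumsequence_trans sumsequence_shift by (metis d_Suc)
  qed
  have refine: "sumsequence (\<lambda>k. d j (Suc k)) (d (Suc j))" for j
    using g tail d_Suc by metis
  have chain: "sumsequence (d (Suc n)) (d m)" if "Suc n \<le> m" for n m
    using that
  proof (induction m rule: dec_induct)
    case (step m)
    then show ?case using sumsequence_trans sumsequence_shift refine by metis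
  qed (rule sumsequence_refl)
  have "sumsequence a (d 0)" using g[OF sumsequence_refl] d0 by simp
  moreover have "d n 0 + d m 0 = d n 0" if nm: "n < m" for n m
  proof -
    obtain G where "finite G" "G \<noteq> {}" "d m 0 = idxsum (\<lambda>k. d n (Suc k)) G"
      using sumsequence_trans[OF refine chain[OF Suc_leI[OF nm]]] by (rule sumsequence_imp_idxsum)
    then show ?thesis
      using add_idxsum_absorb tail[of n] unfolding head_absorbing_def by metis
  qed
  ultimately show ?thesis using sumsequence_trans sumsequence_diagonal[of d, OF refine] by blast
qed

theorem lemma5p1:
  fixes a :: "nat \<Rightarrow> 'a::semigroup_add"
  shows "\<exists>b. sumsequence a b \<and>
           ((\<forall>n m. n < m \<longrightarrow> b n + b m = b n) \<or>
            (\<forall>n. FS b (Suc n) \<inter> ((\<lambda>x. x + b (Suc n)) ` FS b (Suc n)) = {}))"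
proof (cases "\<exists>b. sumsequence a b \<and> fs_separated b")
  case True
  then show ?thesis unfolding fs_separated_def by blast
next
  case False
  have "\<exists>b'. sumsequence b b' \<and> head_absorbing b'" if "sumsequence a b" for b
    using sumsequence_fs_separated_or_head_absorbing[of b] sumsequence_trans[OF that] False by blast
  then show ?thesis using left_absorbing_sumsequence by blast
qed

end
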